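(* Let $0<\eta<\frac1L$ and let $\{(X^k,X_0^k;Y^k,Z^k)\}_{k\ge0}$ be generated by ADAPD-OG (defined in the context). Then for all $k\ge0$, $$\mathcal L_\eta(X^{k+1},X_0^k;Y^k,Z^k)-\mathcal L_\eta(X^k,X_0^k;Y^k,Z^k)\le\frac{L\eta-1}{2\eta}\|X^{k+1}-X^k\|_F^2.$$
   Context: Notation: $\langle A,B\rangle=\sum_{i,j}a_{ij}b_{ij}$, $\|\cdot\|_F$ Frobenius norm, $e\in\mathbb R^N$ all-ones vector. Mixing matrix $W\in\mathbb R^{N\times N}$ of an undirected graph $\mathcal G=(\{1,\dots,N\},\mathcal E)$ with (i) $w_{ij}>0$ if $(i,j)\in\mathcal E$, $w_{ij}=0$ otherwise; (ii) $W=W^\top$; (iii) $\mathrm{null}(I-W)=\mathrm{span}\{e\}$; (iv) $-1<\lambda_N(W)\le\dots\le\lambda_2(W)<\lambda_1(W)=1$. $\sqrt{I-W}$ is the PSD square root of $I-W$. $f_i:\mathbb R^p\to\mathbb R$ differentiable; $F(X)=\frac1N\sum_if_i(x_i)$ for $X$ with rows $x_i^\top$, gradient $\nabla F(X)$ with rows $\frac1N\nabla f_i(x_i)^\top$; $\|\nabla F(X)-\nabla F(X')\|_F\le L\|X-X'\|_F$ for all $X,X'$, $0<L<\infty$. Augmented Lagrangian: $\mathcal L_\eta(X,X_0;Y,Z)=F(X)+\langle Y,X-X_0\rangle+\frac1{2\eta}\|X-X_0\|_F^2+\langle Z,\sqrt{I-W}X_0\rangle+\frac1{2\eta}\|\sqrt{I-W}X_0\|_F^2$.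 ADAPD-OG: fix $\eta>0$; arbitrary $X^0,X_0^0,Y^0$, $Z^0\in\mathrm{range}(\sqrt{I-W})$; for $k\ge0$: $X^{k+1}=X_0^k-\eta(\nabla F(X^k)+Y^k)$, $X_0^{k+1}=\frac12(WX_0^k+X^{k+1}+\eta(Y^k-\sqrt{I-W}Z^k))$, $Y^{k+1}=Y^k+\frac1\eta(X^{k+1}-X_0^{k+1})$, $Z^{k+1}=Z^k+\frac1\eta\sqrt{I-W}X_0^{k+1}$. *)

theory Defs
  imports "HOL-Analysis.Analysis"
begin

text \<open>Matrices X in R^{N x p} are represented as real^'p^'n (rows X$i indexed by 'n).
  The vector norm on nested vectors is the Frobenius norm, the inner product is
  the Frobenius inner product.\<close>

definition psd_mat :: "real^'n^'n \<Rightarrow> bool" where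
  "psd_mat M \<longleftrightarrow> transpose M = M \<and> (\<forall>x. 0 \<le> x \<bullet> (M *v x))"

definition psd_sqrt :: "real^'n^'n \<Rightarrow> real^'n^'n" where
  "psd_sqrt M = (THE S. psd_mat S \<and> S ** S = M)"

definition mixing_matrix :: "('n::finite \<times> 'n) set \<Rightarrow> real^'n^'n \<Rightarrow> bool" where
  "mixing_matrix E W \<longleftrightarrow>
     (\<forall>i j. i \<noteq> j \<longrightarrow> ((i,j) \<in> E \<longrightarrow> W$i$j > 0) \<and> ((i,j) \<notin> E \<longrightarrow> W$i$j = 0)) \<and>
     transpose W = W \<and>
     {x. (mat 1 - W) *v x = 0} = span {1} \<and>
     (\<forall>(c::real) v. v \<noteq> 0 \<and> W *v v = c *\<^sub>R v \<longrightarrow> -1 < c \<and> c \<le> 1)"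

definition objF :: "('n::finite \<Rightarrow> real^'p \<Rightarrow> real) \<Rightarrow> real^'p^'n \<Rightarrow> real" where
  "objF f X = (1 / real CARD('n)) * (\<Sum>i\<in>UNIV. f i (X$i))"

definition gradF :: "('n::finite \<Rightarrow> real^'p \<Rightarrow> real^'p) \<Rightarrow> real^'p^'n \<Rightarrow> real^'p^'n" where
  "gradF g X = (\<chi> i. (1 / real CARD('n)) *\<^sub>R g i (X$i))"

definition aug_lag ::
  "('n::finite \<Rightarrow> real^'p \<Rightarrow> real) \<Rightarrow> real^'n^'n \<Rightarrow> real \<Rightarrow>
   real^'p^'n \<Rightarrow> real^'p^'n \<Rightarrow> real^'p^'n \<Rightarrow> real^'p^'n \<Rightarrow> real" where
  "aug_lag f W \<eta> X X0 Y Z =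
     objF f X + Y \<bullet> (X - X0) + 1 / (2*\<eta>) * (norm (X - X0))\<^sup>2
     + Z \<bullet> (psd_sqrt (mat 1 - W) ** X0)
     + 1 / (2*\<eta>) * (norm (psd_sqrt (mat 1 - W) ** X0))\<^sup>2"

end

theory Submission imports Defs begin

text \<open>The X-update minimises, over X, the model of the augmented Lagrangian in which F is
  replaced by its linearisation at the current iterate; the penalty terms in X0 do not move.
  The descent lemma bounds F by that linearisation up to L/2 times the squared step, and
  comparing the model at the minimiser with the model at the current iterate gains exactly
  1/(2 eta) times the squared step.\<close>

lemma descent_lemma:
  fixes F :: "'a::real_inner \<Rightarrow> real"
  assumes deriv: "\<And>x. (F has_derivative (\<lambda>h. G x \<bullet> h)) (at x)"
    and Lip: "\<And>x y. norm (G x - G y) \<le> L * norm (x - y)"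
  shows "F (x + d) - F x \<le> G x \<bullet> d + L / 2 * (norm d)\<^sup>2"
proof -
  define \<psi> where "\<psi> t = F (x + t *\<^sub>R d) - t * (G x \<bullet> d) - L * t\<^sup>2 / 2 * (norm d)\<^sup>2" for t
  have \<psi>_deriv: "(\<psi> has_real_derivative ((G (x + t *\<^sub>R d) - G x) \<bullet> d - L * t * (norm d)\<^sup>2)) (at t)"
    for t
  proof -
    have "((\<lambda>t. x + t *\<^sub>R d) has_derivative (\<lambda>h. h *\<^sub>R d)) (at t)"
      by (auto intro!: derivative_eq_intros)
    from has_derivative_compose[OF this deriv]
    have "((\<lambda>t. F (x + t *\<^sub>R d)) has_real_derivative (G (x + t *\<^sub>R d) \<bullet> d)) (at t)"
      by (simp add: o_def has_field_derivative_def mult.commute[of _ "G (x + t *\<^sub>R d) \<bullet> d"])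
    then show ?thesis
      unfolding \<psi>_def by (auto intro!: derivative_eq_intros simp: inner_diff_left algebra_simps)
  qed
  have "\<psi> 1 \<le> \<psi> 0"
  proof (rule DERIV_nonpos_imp_nonincreasing[of 0 1 \<psi>])
    fix t :: real assume t: "0 \<le> t" "t \<le> 1"
    have "(G (x + t *\<^sub>R d) - G x) \<bullet> d \<le> norm (G (x + t *\<^sub>R d) - G x) * norm d"
      by (rule norm_cauchy_schwarz)
    also have "\<dots> \<le> L * norm (t *\<^sub>R d) * norm d"
      using Lip[of "x + t *\<^sub>R d" x] by (simp add: mult_right_mono)
    also have "\<dots> = L * t * (norm d)\<^sup>2"
      using t by (simp add: power2_eq_square)
    finally show "\<exists>y. (\<psi> has_real_derivative y) (at t) \<and> y \<le> 0"
      using \<psi>_deriv[of t] by force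
  qed simp
  then show ?thesis unfolding \<psi>_def by simp
qed

lemma has_derivative_objF:
  fixes f :: "'n::finite \<Rightarrow> real^'p::finite \<Rightarrow> real"
  assumes deriv: "\<And>i x. (f i has_derivative (\<lambda>h. g i x \<bullet> h)) (at x)"
  shows "(objF f has_derivative (\<lambda>H. gradF g X \<bullet> H)) (at X)"
proof -
  have row_deriv: "((\<lambda>X. f i (X$i)) has_derivative (\<lambda>H. g i (X$i) \<bullet> (H$i))) (at X)" for i
    using has_derivative_compose[OF bounded_linear_imp_has_derivative[OF bounded_linear_vec_nth[of i]]
        deriv[of i]]
    by (simp add: o_def)
  have "((\<lambda>X. (1 / real CARD('n)) * (\<Sum>i\<in>UNIV. f i (X$i))) has_derivative
        (\<lambda>H. (1 / real CARD('n)) * (\<Sum>i\<in>UNIV. g i (X$i) \<bullet> (H$i)))) (at X)"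
    by (intro has_derivative_mult_right has_derivative_sum row_deriv)
  moreover have "(\<lambda>H. (1 / real CARD('n)) * (\<Sum>i\<in>UNIV. g i (X$i) \<bullet> (H$i))) = (\<lambda>H. gradF g X \<bullet> H)"
    by (auto simp: gradF_def inner_vec_def sum_distrib_left)
  ultimately show ?thesis unfolding objF_def by simp
qed

lemma aug_lag_diff_primal:
  "aug_lag f W \<eta> X' X0 Y Z - aug_lag f W \<eta> X X0 Y Z
     = objF f X' - objF f X + Y \<bullet> (X' - X)
       + 1 / (2*\<eta>) * ((norm (X' - X0))\<^sup>2 - (norm (X - X0))\<^sup>2)"
  by (simp add: aug_lag_def inner_diff_right algebra_simps)

lemma norm_diff_square_eq:
  fixes a d :: "'a::real_inner"
  shows "(norm a)\<^sup>2 - (norm (a - d))\<^sup>2 = 2 * (a \<bullet> d) - (norm d)\<^sup>2"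
  by (simp add: power2_norm_eq_inner inner_diff_left inner_diff_right inner_commute)

lemma aug_lag_primal_step_descent:
  fixes f :: "'n::finite \<Rightarrow> real^'p::finite \<Rightarrow> real"
  assumes deriv: "\<And>i x. (f i has_derivative (\<lambda>h. g i x \<bullet> h)) (at x)"
    and Lip: "\<And>U V. norm (gradF g U - gradF g V) \<le> L * norm (U - V)"
    and "0 < \<eta>"
    and step: "X' = X0 - \<eta> *\<^sub>R (gradF g X + Y)"
  shows "aug_lag f W \<eta> X' X0 Y Z - aug_lag f W \<eta> X X0 Y Z
           \<le> (L * \<eta> - 1) / (2 * \<eta>) * (norm (X' - X))\<^sup>2"
proof -
  define D where "D = X' - X"
  have objF_step: "objF f X' - objF f X \<le> gradF g X \<bullet> D + L / 2 * (norm D)\<^sup>2"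
    using descent_lemma[OF has_derivative_objF[OF deriv] Lip, of X D] by (simp add: D_def)
  have "X - X0 = (X' - X0) - D" unfolding D_def by simp
  then have penalty: "(norm (X' - X0))\<^sup>2 - (norm (X - X0))\<^sup>2
      = - 2 * \<eta> * ((gradF g X + Y) \<bullet> D) - (norm D)\<^sup>2"
    using norm_diff_square_eq[of "X' - X0" D] step by simp
  have "aug_lag f W \<eta> X' X0 Y Z - aug_lag f W \<eta> X X0 Y Z
      = objF f X' - objF f X - gradF g X \<bullet> D - 1 / (2*\<eta>) * (norm D)\<^sup>2"
    unfolding aug_lag_diff_primal D_def[symmetric] penalty
    using \<open>0 < \<eta>\<close> by (simp add: inner_add_left field_simps)
  also have "\<dots> \<le> L / 2 * (norm D)\<^sup>2 - 1 / (2*\<eta>) * (norm D)\<^sup>2"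
    using objF_step by linarith
  also have "\<dots> = (L * \<eta> - 1) / (2 * \<eta>) * (norm D)\<^sup>2"
    using \<open>0 < \<eta>\<close> by (simp add: field_simps)
  finally show ?thesis unfolding D_def .
qed

theorem lemma10:
  fixes E :: "('n::finite \<times> 'n) set" and W :: "real^'n^'n"
    and f :: "'n \<Rightarrow> real^'p::finite \<Rightarrow> real" and g :: "'n \<Rightarrow> real^'p \<Rightarrow> real^'p"
    and L \<eta> :: real
    and X X0 Y Z :: "nat \<Rightarrow> real^'p^'n"
  assumes graph: "sym E" "irrefl E"
    and mix: "mixing_matrix E W"
    and grad: "\<And>i x. (f i has_derivative (\<lambda>h. g i x \<bullet> h)) (at x)"
    and Lpos: "0 < L"
    and Lip: "\<And>U V. norm (gradF g U - gradF g V) \<le> L * norm (U - V)"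
    and eta: "0 < \<eta>" "\<eta> < 1 / L"
    and Z0: "Z 0 \<in> range (\<lambda>M. psd_sqrt (mat 1 - W) ** M)"
    and upd_X: "\<And>k. X (Suc k) = X0 k - \<eta> *\<^sub>R (gradF g (X k) + Y k)"
    and upd_X0: "\<And>k. X0 (Suc k) = (1/2) *\<^sub>R (W ** X0 k + X (Suc k)
                     + \<eta> *\<^sub>R (Y k - psd_sqrt (mat 1 - W) ** Z k))"
    and upd_Y: "\<And>k. Y (Suc k) = Y k + (1/\<eta>) *\<^sub>R (X (Suc k) - X0 (Suc k))"
    and upd_Z: "\<And>k. Z (Suc k) = Z k + (1/\<eta>) *\<^sub>R (psd_sqrt (mat 1 - W) ** X0 (Suc k))"
  shows "\<forall>k. aug_lag f W \<eta> (X (Suc k)) (X0 k) (Y k) (Z k) - aug_lag f W \<eta> (X k) (X0 k) (Y k) (Z k)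
           \<le> (L * \<eta> - 1) / (2 * \<eta>) * (norm (X (Suc k) - X k))\<^sup>2"
  using aug_lag_primal_step_descent[OF grad Lip eta(1) upd_X] by blast

end
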